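(* Let $G$ be a sequential space and let $X\subseteq G$ be a countable set with no isolated points as a subspace of $G$. Then the forcing $\mathbb L_{\mathrm{nwd}^*(X)}$ strongly preserves $\omega$-hitting.
   Context: All spaces are regular. $\mathrm{nwd}^*(X)$ is the filter of dense open subsets of $X$ (a free filter on the countable set $X$, identified with $\omega$). For a free filter $\mathcal F$ on $\omega$, the Laver--Mathias--Prikry forcing $\mathbb L_{\mathcal F}$ consists of trees $T\subseteq\omega^{<\omega}$ having a stem $s_T\in T$ such that every $s\in T$ satisfies $s\subseteq s_T$ or $s_T\subseteq s$, and for every $s\in T$ with $s\supseteq s_T$ the set $\{n\in\omega: s^\frown n\in T\}\in\mathcal F$; it is ordered by inclusion. A family $\mathcal H\subseteq[\omega]^\omega$ is $\omega$-hitting if for every sequence $(A_n)_{n\in\omega}$ of infinite subsets of $\omega$ there is $H\in\mathcal H$ with $H\cap A_n$ infinite for all $n$. A forcing $\mathbb P$ strongly preserves $\omega$-hitting if for every sequence $(\dot A_n)_{n\in\omega}$ of $\mathbb P$-names for infinite subsets of $\omega$ there is a sequence $(B_n)_{n\in\omega}$ of infinite subsets of $\omega$ such that for every $B\subseteq\omega$ with $B\cap B_n$ infinite for all $n$, $\Vdash_{\mathbb P}$ "$B\cap\dot A_n$ is infinite for all $n$". *)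

theory Defs
  imports "HOL-Analysis.Analysis" "HOL-Library.Sublist"
begin

definition sequential_space :: "'a topology \<Rightarrow> bool" where
  "sequential_space G \<longleftrightarrow>
     (\<forall>S. S \<subseteq> topspace G \<longrightarrow>
        (\<forall>f l. (\<forall>n. f n \<in> S) \<and> limitin G f l sequentially \<longrightarrow> l \<in> S) \<longrightarrow> closedin G S)"

definition nwd_star :: "'a topology \<Rightarrow> 'a set \<Rightarrow> 'a set set" where
  "nwd_star G X = {U. U \<subseteq> X \<and> openin (subtopology G X) U
                      \<and> (subtopology G X) closure_of U = X}"

text \<open>Conditions of the Laver--Mathias--Prikry forcing L_F: trees T of finite
  sequences (lists) of naturals with a stem st in T comparable with every node,
  and F-many immediate successors above the stem.  Order: inclusion.\<close>
definition laver_cond :: "nat set set \<Rightarrow> nat list set \<Rightarrow> bool" where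
  "laver_cond F T \<longleftrightarrow>
     (\<forall>t\<in>T. \<forall>s. prefix s t \<longrightarrow> s \<in> T) \<and>
     (\<exists>st\<in>T. (\<forall>s\<in>T. prefix s st \<or> prefix st s) \<and>
              (\<forall>s\<in>T. prefix st s \<longrightarrow> {n. s @ [n] \<in> T} \<in> F))"

definition laver_forcing :: "nat set set \<Rightarrow> nat list set set" where
  "laver_forcing F = {T. laver_cond F T}"

text \<open>A P-name for a subset of omega, represented (up to forced equality) by its
  forcing relation D = {(p,k). p forces k in the name}: D is downward closed
  and closed under density (if densely many q below p force k in the name then so
  does p).  Every such D arises from a nice name and conversely.\<close>
definition set_name :: "'p set \<Rightarrow> ('p \<Rightarrow> 'p \<Rightarrow> bool) \<Rightarrow> ('p \<times> nat) set \<Rightarrow> bool" where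
  "set_name P le D \<longleftrightarrow>
     (\<forall>p k. (p, k) \<in> D \<longrightarrow> p \<in> P) \<and>
     (\<forall>p q k. (p, k) \<in> D \<longrightarrow> q \<in> P \<longrightarrow> le q p \<longrightarrow> (q, k) \<in> D) \<and>
     (\<forall>p\<in>P. \<forall>k. (\<forall>q\<in>P. le q p \<longrightarrow> (\<exists>r\<in>P. le r q \<and> (r, k) \<in> D)) \<longrightarrow> (p, k) \<in> D)"

text \<open>The weakest condition forces "B \<inter> name is infinite".\<close>
definition forces_inter_infinite :: "'p set \<Rightarrow> ('p \<Rightarrow> 'p \<Rightarrow> bool) \<Rightarrow> nat set \<Rightarrow> ('p \<times> nat) set \<Rightarrow> bool" where
  "forces_inter_infinite P le B D \<longleftrightarrow>
     (\<forall>p\<in>P. \<forall>m. \<exists>q\<in>P. le q p \<and> (\<exists>k\<in>B. m \<le> k \<and> (q, k) \<in> D))"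

definition strongly_preserves_omega_hitting :: "'p set \<Rightarrow> ('p \<Rightarrow> 'p \<Rightarrow> bool) \<Rightarrow> bool" where
  "strongly_preserves_omega_hitting P le \<longleftrightarrow>
     (\<forall>A :: nat \<Rightarrow> ('p \<times> nat) set.
        (\<forall>n. set_name P le (A n) \<and> forces_inter_infinite P le UNIV (A n)) \<longrightarrow>
        (\<exists>Bs :: nat \<Rightarrow> nat set. (\<forall>n. infinite (Bs n)) \<and>
           (\<forall>B. (\<forall>n. infinite (B \<inter> Bs n)) \<longrightarrow>
                (\<forall>n. forces_inter_infinite P le B (A n)))))"

end

theory Submission
  imports Defs
begin

text \<open>Given a name A for an infinite subset of omega, let possible_values T be the set of k that
  some extension of the condition T forces into A. It suffices to find countably many infinite
  sets such that every possible_values T almost contains one of them: a set B meeting all of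
  them infinitely is then forced to meet A infinitely.

  Call k forceable at a node t if a condition with stem t forces k into A, or if positively many
  successors of t make k forceable. For a condition T with stem s, either infinitely many values
  are forceable at s (and all of them are possible below T), or some node t above s has
  positively many successors contributing new forceable values; otherwise pruning T leaves a
  condition with only finitely many possible values. In the second case the new values are
  sets indexed by the successors of t whose fibres are nwd*(X)-null, and the countable family
  comes from sequentiality: if nowhere dense sets P k have a somewhere dense union, countably
  many finite-to-one sequences (k j) suffice so that for every dense open U almost all P (k j)
  meet U.\<close>

section \<open>Countable pi-bases modulo finite sets\<close>

definition countable_pi_base_mod_finite :: "nat set set \<Rightarrow> bool" where
  "countable_pi_base_mod_finite H \<longleftrightarrow>
     (\<exists>CC. countable CC \<and> (\<forall>C\<in>CC. infinite C) \<and> (\<forall>Y\<in>H. \<exists>C\<in>CC. finite (C - Y)))"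

lemma countable_pi_base_mod_finite_mono:
  assumes "countable_pi_base_mod_finite H'" and "\<And>Y. Y \<in> H \<Longrightarrow> \<exists>Y'\<in>H'. Y' \<subseteq> Y"
  shows "countable_pi_base_mod_finite H"
proof -
  obtain CC where CC: "countable CC" "\<forall>C\<in>CC. infinite C" "\<forall>Y\<in>H'. \<exists>C\<in>CC. finite (C - Y)"
    using assms(1) unfolding countable_pi_base_mod_finite_def by blast
  have "\<exists>C\<in>CC. finite (C - Y)" if Y: "Y \<in> H" for Y
  proof -
    obtain Y' where "Y' \<in> H'" "Y' \<subseteq> Y" using assms(2) Y by blast
    then obtain C where "C \<in> CC" "finite (C - Y')" using CC(3) by blast
    then show ?thesis using \<open>Y' \<subseteq> Y\<close> by (meson Diff_mono finite_subset order_refl)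
  qed
  then show ?thesis using CC(1,2) unfolding countable_pi_base_mod_finite_def by blast
qed

lemma hitting_sequence_of_countable_pi_bases:
  fixes H :: "nat \<Rightarrow> nat set set"
  assumes "\<And>n. countable_pi_base_mod_finite (H n)"
  shows "\<exists>Bs :: nat \<Rightarrow> nat set. (\<forall>m. infinite (Bs m)) \<and>
    (\<forall>B. (\<forall>m. infinite (B \<inter> Bs m)) \<longrightarrow> (\<forall>n. \<forall>Y\<in>H n. infinite (B \<inter> Y)))"
proof -
  have "\<forall>n. \<exists>CC. countable CC \<and> (\<forall>C\<in>CC. infinite C) \<and> (\<forall>Y\<in>H n. \<exists>C\<in>CC. finite (C - Y))"
    using assms unfolding countable_pi_base_mod_finite_def by blast
  from choice[OF this] obtain CC :: "nat \<Rightarrow> nat set set" where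
    CC: "\<forall>n. countable (CC n) \<and> (\<forall>C\<in>CC n. infinite C) \<and> (\<forall>Y\<in>H n. \<exists>C\<in>CC n. finite (C - Y))"
    ..
  define Cs where "Cs = insert UNIV (\<Union>n. CC n)"
  have "countable Cs" unfolding Cs_def using CC by (intro countable_insert countable_UN) auto
  then have range_Bs: "range (from_nat_into Cs) = Cs"
    by (simp add: Cs_def range_from_nat_into)
  show ?thesis
  proof (intro exI[of _ "from_nat_into Cs"] conjI allI impI ballI)
    fix m
    have "from_nat_into Cs m \<in> Cs" using range_Bs by blast
    then show "infinite (from_nat_into Cs m)" unfolding Cs_def using CC by auto
  next
    fix B n Y assume hit: "\<forall>m. infinite (B \<inter> from_nat_into Cs m)" and "Y \<in> H n"
    then obtain C where C: "C \<in> CC n" "finite (C - Y)" using CC by blast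
    then have "C \<in> range (from_nat_into Cs)" using range_Bs unfolding Cs_def by blast
    then have "infinite (B \<inter> C)" using hit by blast
    moreover have "B \<inter> C \<subseteq> (B \<inter> Y) \<union> (C - Y)" by blast
    ultimately show "infinite (B \<inter> Y)" using C(2) by (meson finite_UnI finite_subset)
  qed
qed

definition possible_values :: "'p set \<Rightarrow> ('p \<Rightarrow> 'p \<Rightarrow> bool) \<Rightarrow> ('p \<times> nat) set \<Rightarrow> 'p \<Rightarrow> nat set" where
  "possible_values P le D p = {k. \<exists>q\<in>P. le q p \<and> (q, k) \<in> D}"

lemma forces_inter_infinite_iff:
  "forces_inter_infinite P le B D \<longleftrightarrow> (\<forall>p\<in>P. infinite (B \<inter> possible_values P le D p))"
  unfolding forces_inter_infinite_def possible_values_def infinite_nat_iff_unbounded_le by blast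

lemma strongly_preserves_omega_hitting_if_countable_pi_bases:
  fixes P :: "'p set"
  assumes "\<And>D. set_name P le D \<Longrightarrow> forces_inter_infinite P le UNIV D \<Longrightarrow>
             countable_pi_base_mod_finite (possible_values P le D ` P)"
  shows "strongly_preserves_omega_hitting P le"
  unfolding strongly_preserves_omega_hitting_def
proof (intro allI impI)
  fix A :: "nat \<Rightarrow> ('p \<times> nat) set"
  assume "\<forall>n. set_name P le (A n) \<and> forces_inter_infinite P le UNIV (A n)"
  then have "countable_pi_base_mod_finite (possible_values P le (A n) ` P)" for n
    using assms by blast
  then obtain Bs :: "nat \<Rightarrow> nat set" where Bs: "\<forall>m. infinite (Bs m)"
    and hit: "\<forall>B. (\<forall>m. infinite (B \<inter> Bs m)) \<longrightarrow>
           (\<forall>n. \<forall>Y\<in>possible_values P le (A n) ` P. infinite (B \<inter> Y))"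
    using hitting_sequence_of_countable_pi_bases[of "\<lambda>n. possible_values P le (A n) ` P"] by blast
  show "\<exists>Bs :: nat \<Rightarrow> nat set. (\<forall>n. infinite (Bs n)) \<and>
      (\<forall>B. (\<forall>n. infinite (B \<inter> Bs n)) \<longrightarrow> (\<forall>n. forces_inter_infinite P le B (A n)))"
    unfolding forces_inter_infinite_iff
  proof (rule exI[of _ Bs], intro conjI allI impI ballI)
    show "infinite (Bs n)" for n using Bs by blast
    show "infinite (B \<inter> possible_values P le (A n) p)"
      if "\<forall>m. infinite (B \<inter> Bs m)" "p \<in> P" for B n p
      using hit that by blast
  qed
qed

section \<open>The Laver rank argument\<close>

definition laver_stem :: "nat set set \<Rightarrow> nat list set \<Rightarrow> nat list \<Rightarrow> bool" where
  "laver_stem F T s \<longleftrightarrow> s \<in> T \<and> (\<forall>t\<in>T. prefix t s \<or> prefix s t) \<and>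
     (\<forall>t\<in>T. prefix s t \<longrightarrow> {n. t @ [n] \<in> T} \<in> F)"

lemma laver_forcing_iff:
  "T \<in> laver_forcing F \<longleftrightarrow> (\<forall>t\<in>T. \<forall>s. prefix s t \<longrightarrow> s \<in> T) \<and> (\<exists>s. laver_stem F T s)"
  unfolding laver_forcing_def laver_cond_def laver_stem_def by auto

definition positive_set :: "nat set set \<Rightarrow> nat set \<Rightarrow> bool" where
  "positive_set F Y \<longleftrightarrow> (\<forall>A\<in>F. A \<inter> Y \<noteq> {})"

lemma positive_set_mono [mono]:
  "(\<And>i. P i \<longrightarrow> Q i) \<Longrightarrow> positive_set F {i. P i} \<longrightarrow> positive_set F {i. Q i}"
  unfolding positive_set_def by blast

locale laver_family =
  fixes F :: "nat set set"
  assumes UNIV_in: "UNIV \<in> F"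
    and Int_in: "A \<in> F \<Longrightarrow> B \<in> F \<Longrightarrow> A \<inter> B \<in> F"
    and nontrivial: "A \<in> F \<Longrightarrow> \<exists>i\<in>A. \<exists>j\<in>A. i \<noteq> j"
    and countable_pi_base_traces:
      "(\<And>k. \<not> positive_set F {i. k \<in> \<phi> i}) \<Longrightarrow> positive_set F {i. \<phi> i \<noteq> {}} \<Longrightarrow>
         countable_pi_base_mod_finite ((\<lambda>A. \<Union>i\<in>A. \<phi> i) ` F)"
begin

lemma not_positive_empty: "\<not> positive_set F {}"
  using UNIV_in unfolding positive_set_def by blast

lemma laver_stem_below:
  assumes q: "laver_stem F q t" "q \<subseteq> T" and T: "laver_stem F T s"
  shows "prefix s t"
proof (rule ccontr)
  assume "\<not> prefix s t"
  moreover have "t \<in> T" using q unfolding laver_stem_def by blast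
  ultimately have "prefix t s" using T unfolding laver_stem_def by blast
  then obtain u where "s = t @ u" using prefixE by blast
  moreover have "u \<noteq> []" using \<open>\<not> prefix s t\<close> calculation by auto
  ultimately obtain c r where s: "s = t @ c # r" by (cases u) auto
  have "n = c" if "t @ [n] \<in> q" for n
  proof -
    have "prefix (t @ [n]) s \<or> prefix s (t @ [n])" using that q(2) T unfolding laver_stem_def by blast
    then show ?thesis unfolding s by auto
  qed
  moreover obtain a b where "t @ [a] \<in> q" "t @ [b] \<in> q" "a \<noteq> b"
    using nontrivial q(1) unfolding laver_stem_def by blast
  ultimately show False by blast
qed

lemma laver_forcing_Int:
  assumes q: "q \<in> laver_forcing F" "laver_stem F q t"
    and T: "T \<in> laver_forcing F" "laver_stem F T s" and "t \<in> T" "prefix s t"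
  shows "q \<inter> T \<in> laver_forcing F"
proof -
  have "{n. u @ [n] \<in> q \<inter> T} \<in> F" if "u \<in> q \<inter> T" "prefix t u" for u
  proof -
    have "{n. u @ [n] \<in> q} \<in> F" using q(2) that unfolding laver_stem_def by blast
    moreover have "{n. u @ [n] \<in> T} \<in> F"
      using T(2) that \<open>prefix s t\<close> prefix_order.trans unfolding laver_stem_def by blast
    ultimately show ?thesis using Int_in by (simp add: Collect_conj_eq)
  qed
  then have "laver_stem F (q \<inter> T) t" using q(2) \<open>t \<in> T\<close> unfolding laver_stem_def by blast
  then show ?thesis using q(1) T(1) unfolding laver_forcing_iff by blast
qed

lemma laver_forcing_prune:
  assumes T: "T \<in> laver_forcing F" "laver_stem F T s"
    and A: "\<And>t. t \<in> T \<Longrightarrow> prefix s t \<Longrightarrow> A t \<in> F"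
  obtains T' where "T' \<in> laver_forcing F" "T' \<subseteq> T" "laver_stem F T' s"
    and "\<And>t n. t @ [n] \<in> T' \<Longrightarrow> prefix s t \<Longrightarrow> n \<in> A t"
proof -
  define T' where "T' = {v \<in> T. \<forall>j\<in>{length s..<length v}. v ! j \<in> A (take j v)}"
  have succ: "{n. t @ [n] \<in> T'} = {n. t @ [n] \<in> T} \<inter> A t" if "t \<in> T'" "prefix s t" for t
  proof -
    have "length s \<le> length t" using that(2) prefix_length_le by blast
    then have "{length s..<length (t @ [n])} = insert (length t) {length s..<length t}" for n
      by auto
    then show ?thesis using that(1) unfolding T'_def by (auto simp: nth_append)
  qed
  have closed: "w \<in> T'" if v: "v \<in> T'" and "prefix w v" for v w
  proof -
    obtain u where v_eq: "v = w @ u" using \<open>prefix w v\<close> prefixE by blast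
    have "w \<in> T" using v \<open>prefix w v\<close> T(1) unfolding T'_def laver_forcing_iff by blast
    moreover have "w ! j \<in> A (take j w)" if j: "j \<in> {length s..<length w}" for j
    proof -
      have "j \<in> {length s..<length v}" using j v_eq by auto
      then have "v ! j \<in> A (take j v)" using v unfolding T'_def by blast
      then show ?thesis using j by (simp add: v_eq nth_append)
    qed
    ultimately show ?thesis unfolding T'_def by blast
  qed
  have stem: "laver_stem F T' s"
    unfolding laver_stem_def
  proof (intro conjI ballI impI)
    show "s \<in> T'" using T(2) unfolding T'_def laver_stem_def by simp
  next
    fix t assume "t \<in> T'"
    then show "prefix t s \<or> prefix s t" using T(2) unfolding T'_def laver_stem_def by blast
  next
    fix t assume t: "t \<in> T'" "prefix s t"
    then have "t \<in> T" unfolding T'_def by blast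
    then have "{n. t @ [n] \<in> T} \<inter> A t \<in> F"
      using Int_in A t(2) T(2) unfolding laver_stem_def by blast
    then show "{n. t @ [n] \<in> T'} \<in> F" using succ[OF t] by simp
  qed
  show thesis
  proof (rule that[of T'])
    show "T' \<in> laver_forcing F" using closed stem unfolding laver_forcing_iff by blast
    show "T' \<subseteq> T" unfolding T'_def by blast
    show "laver_stem F T' s" by (rule stem)
    show "n \<in> A t" if "t @ [n] \<in> T'" "prefix s t" for t n
      using succ[OF closed[OF that(1)] that(2)] that(1) by auto
  qed
qed

end

locale laver_name = laver_family +
  fixes D :: "(nat list set \<times> nat) set"
  assumes name: "set_name (laver_forcing F) (\<subseteq>) D"
    and forced_infinite: "forces_inter_infinite (laver_forcing F) (\<subseteq>) UNIV D"
begin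

abbreviation values_below :: "nat list set \<Rightarrow> nat set" where
  "values_below T \<equiv> possible_values (laver_forcing F) (\<subseteq>) D T"

lemma name_downward_closed:
  "(p, k) \<in> D \<Longrightarrow> q \<in> laver_forcing F \<Longrightarrow> q \<subseteq> p \<Longrightarrow> (q, k) \<in> D"
  using name unfolding set_name_def by blast

lemma values_below_infinite: "T \<in> laver_forcing F \<Longrightarrow> infinite (values_below T)"
  using forced_infinite unfolding forces_inter_infinite_iff by simp

definition stem_values :: "nat list \<Rightarrow> nat set" where
  "stem_values t = {k. \<exists>q\<in>laver_forcing F. laver_stem F q t \<and> (q, k) \<in> D}"

inductive forceable :: "nat list \<Rightarrow> nat \<Rightarrow> bool" where
  stem: "k \<in> stem_values t \<Longrightarrow> forceable t k"
| positive: "positive_set F {i. forceable (t @ [i]) k} \<Longrightarrow> forceable t k"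

definition forceable_values :: "nat list \<Rightarrow> nat set" where
  "forceable_values t = {k. forceable t k}"

definition new_values :: "nat list \<Rightarrow> nat \<Rightarrow> nat set" where
  "new_values t i = forceable_values (t @ [i]) - forceable_values t"

lemma forceable_imp_values_below:
  assumes "forceable t k" and T: "T \<in> laver_forcing F" "laver_stem F T s"
    and "t \<in> T" "prefix s t"
  shows "k \<in> values_below T"
  using assms(1,4,5)
proof (induction rule: forceable.induct)
  case (stem k t)
  then obtain q where q: "q \<in> laver_forcing F" "laver_stem F q t" "(q, k) \<in> D"
    unfolding stem_values_def by blast
  have "q \<inter> T \<in> laver_forcing F" using laver_forcing_Int[OF q(1,2) T stem.prems] .
  then show ?case using name_downward_closed[OF q(3)] unfolding possible_values_def by blast
next
  case (positive t k)
  have "{n. t @ [n] \<in> T} \<in> F" using T(2) positive.prems unfolding laver_stem_def by blast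
  then have "{n. t @ [n] \<in> T} \<inter> {i. forceable (t @ [i]) k \<and>
      (t @ [i] \<in> T \<longrightarrow> prefix s (t @ [i]) \<longrightarrow> k \<in> values_below T)} \<noteq> {}"
    by (rule bspec[OF positive.IH[unfolded positive_set_def]])
  then obtain i where "t @ [i] \<in> T" "prefix s (t @ [i]) \<longrightarrow> k \<in> values_below T"
    by blast
  then show ?case using positive.prems(2) by simp
qed

lemma forceable_values_below:
  "T \<in> laver_forcing F \<Longrightarrow> laver_stem F T s \<Longrightarrow> t \<in> T \<Longrightarrow> prefix s t \<Longrightarrow>
     forceable_values t \<subseteq> values_below T"
  using forceable_imp_values_below unfolding forceable_values_def by blast

lemma values_below_stem_values:
  assumes T: "T \<in> laver_forcing F" "laver_stem F T s" and "k \<in> values_below T"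
  obtains t where "t \<in> T" "prefix s t" "k \<in> stem_values t"
proof -
  obtain q where q: "q \<in> laver_forcing F" "q \<subseteq> T" "(q, k) \<in> D"
    using \<open>k \<in> values_below T\<close> unfolding possible_values_def by blast
  then obtain t where t: "laver_stem F q t" unfolding laver_forcing_iff by blast
  have "prefix s t" using laver_stem_below[OF t q(2) T(2)] .
  moreover have "t \<in> T" using t q(2) unfolding laver_stem_def by blast
  moreover have "k \<in> stem_values t" unfolding stem_values_def using q(1,3) t by blast
  ultimately show thesis using that by blast
qed

lemma new_values_not_positive: "\<not> positive_set F {i. k \<in> new_values t i}"
proof (cases "forceable t k")
  case True
  then have "{i. k \<in> new_values t i} = {}" unfolding new_values_def forceable_values_def by auto
  then show ?thesis using not_positive_empty by simp
next
  case False
  then have "\<not> positive_set F {i. forceable (t @ [i]) k}" using forceable.positive by blast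
  then show ?thesis unfolding new_values_def forceable_values_def positive_set_def by blast
qed

lemma forceable_values_subset_stem:
  assumes T: "T \<in> laver_forcing F"
    and no_new: "\<And>t n. t @ [n] \<in> T \<Longrightarrow> prefix s t \<Longrightarrow> new_values t n = {}"
  shows "t \<in> T \<Longrightarrow> prefix s t \<Longrightarrow> forceable_values t \<subseteq> forceable_values s"
proof (induction t rule: rev_induct)
  case (snoc i t)
  show ?case
  proof (cases "s = t @ [i]")
    case False
    then have "prefix s t" using snoc.prems(2) by (simp add: prefix_snoc)
    have "t \<in> T" using snoc.prems(1) T unfolding laver_forcing_iff by force
    then have "forceable_values t \<subseteq> forceable_values s" using \<open>prefix s t\<close> by (rule snoc.IH)
    moreover have "new_values t i = {}" using no_new snoc.prems(1) \<open>prefix s t\<close> .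
    ultimately show ?thesis unfolding new_values_def by blast
  qed simp
qed simp

lemma values_below_subset_stem:
  assumes T: "T \<in> laver_forcing F" "laver_stem F T s"
    and no_new: "\<And>t n. t @ [n] \<in> T \<Longrightarrow> prefix s t \<Longrightarrow> new_values t n = {}"
  shows "values_below T \<subseteq> forceable_values s"
proof
  fix k assume "k \<in> values_below T"
  then obtain t where t: "t \<in> T" "prefix s t" "k \<in> stem_values t"
    using values_below_stem_values[OF T] by blast
  then have "k \<in> forceable_values t" unfolding forceable_values_def by (blast intro: forceable.stem)
  then show "k \<in> forceable_values s" using forceable_values_subset_stem[OF T(1) no_new t(1,2)] by blast
qed

text \<open>Otherwise pruning T to successors without new values leaves only the finitely many values
  forceable at the stem.\<close>
lemma stem_forceable_infinite_or_new_values_positive: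
  assumes T: "T \<in> laver_forcing F" "laver_stem F T s"
  shows "infinite (forceable_values s) \<or>
    (\<exists>t\<in>T. prefix s t \<and> positive_set F {i. new_values t i \<noteq> {}})"
proof (rule ccontr)
  assume "\<not> ?thesis"
  then have finite: "finite (forceable_values s)"
    and "\<forall>t. \<exists>A. t \<in> T \<longrightarrow> prefix s t \<longrightarrow> A \<in> F \<and> (\<forall>i\<in>A. new_values t i = {})"
    unfolding positive_set_def by blast+
  then obtain A where A: "\<And>t. t \<in> T \<Longrightarrow> prefix s t \<Longrightarrow> A t \<in> F \<and> (\<forall>i\<in>A t. new_values t i = {})"
    by metis
  obtain T' where T': "T' \<in> laver_forcing F" "T' \<subseteq> T" "laver_stem F T' s"
      and succ: "\<And>t n. t @ [n] \<in> T' \<Longrightarrow> prefix s t \<Longrightarrow> n \<in> A t"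
    using laver_forcing_prune[OF T] A by metis
  have "new_values t n = {}" if "t @ [n] \<in> T'" "prefix s t" for t n
  proof -
    have "t \<in> T" using that(1) T'(1,2) unfolding laver_forcing_iff by force
    then show ?thesis using A succ[OF that] that(2) by blast
  qed
  then have "values_below T' \<subseteq> forceable_values s" by (rule values_below_subset_stem[OF T'(1,3)])
  then show False using finite values_below_infinite[OF T'(1)] finite_subset by blast
qed

lemma values_below_witness:
  assumes T: "T \<in> laver_forcing F"
  obtains s where "infinite (forceable_values s)" "forceable_values s \<subseteq> values_below T"
  | t A where "positive_set F {i. new_values t i \<noteq> {}}" "A \<in> F"
      "(\<Union>i\<in>A. new_values t i) \<subseteq> values_below T"
proof -
  obtain s where s: "laver_stem F T s" using T unfolding laver_forcing_iff by blast
  then have "s \<in> T" unfolding laver_stem_def by blast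
  consider "infinite (forceable_values s)"
    | t where "t \<in> T" "prefix s t" "positive_set F {i. new_values t i \<noteq> {}}"
    using stem_forceable_infinite_or_new_values_positive[OF T s] by blast
  then show thesis
  proof cases
    case 1
    then show thesis using that(1) forceable_values_below[OF T s \<open>s \<in> T\<close>] by blast
  next
    case (2 t)
    have "{n. t @ [n] \<in> T} \<in> F" using s 2(1,2) unfolding laver_stem_def by blast
    moreover have "new_values t i \<subseteq> values_below T" if "t @ [i] \<in> T" for i
      using forceable_values_below[OF T s that] 2(2) unfolding new_values_def by auto
    ultimately show thesis using that(2)[OF 2(3)] by blast
  qed
qed

lemma countable_pi_base_values_below:
  "countable_pi_base_mod_finite (values_below ` laver_forcing F)"
proof -
  have "\<exists>CC. positive_set F {i. new_values t i \<noteq> {}} \<longrightarrow>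
      countable CC \<and> (\<forall>C\<in>CC. infinite C) \<and>
      (\<forall>Y\<in>(\<lambda>A. \<Union>i\<in>A. new_values t i) ` F. \<exists>C\<in>CC. finite (C - Y))" for t
    using countable_pi_base_traces[of "new_values t", OF new_values_not_positive]
    unfolding countable_pi_base_mod_finite_def by simp
  then have "\<forall>t. \<exists>CC. positive_set F {i. new_values t i \<noteq> {}} \<longrightarrow>
      countable CC \<and> (\<forall>C\<in>CC. infinite C) \<and>
      (\<forall>Y\<in>(\<lambda>A. \<Union>i\<in>A. new_values t i) ` F. \<exists>C\<in>CC. finite (C - Y))"
    by (rule allI)
  from choice[OF this] obtain CC where CC: "\<forall>t. positive_set F {i. new_values t i \<noteq> {}} \<longrightarrow>
      countable (CC t) \<and> (\<forall>C\<in>CC t. infinite C) \<and>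
      (\<forall>Y\<in>(\<lambda>A. \<Union>i\<in>A. new_values t i) ` F. \<exists>C\<in>CC t. finite (C - Y))"
    ..
  define Fam where "Fam = forceable_values ` {t. infinite (forceable_values t)} \<union>
    (\<Union>t\<in>{t. positive_set F {i. new_values t i \<noteq> {}}}. CC t)"
  have "\<exists>C\<in>Fam. finite (C - values_below T)" if T: "T \<in> laver_forcing F" for T
    using T
  proof (cases rule: values_below_witness)
    case (1 s)
    then have "forceable_values s \<in> Fam" unfolding Fam_def by blast
    moreover have "forceable_values s - values_below T = {}" using 1(2) by blast
    ultimately show ?thesis by (metis finite.emptyI)
  next
    case (2 t A)
    then have "(\<Union>i\<in>A. new_values t i) \<in> (\<lambda>A. \<Union>i\<in>A. new_values t i) ` F" by blast
    moreover have "\<forall>Y\<in>(\<lambda>A. \<Union>i\<in>A. new_values t i) ` F. \<exists>C\<in>CC t. finite (C - Y)"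
      using CC 2(1) by blast
    ultimately obtain C where C: "C \<in> CC t" "finite (C - (\<Union>i\<in>A. new_values t i))"
      by (meson bspec bexE)
    then have "finite (C - values_below T)"
      using 2(3) by (meson Diff_mono finite_subset order_refl)
    moreover have "C \<in> Fam" unfolding Fam_def using C(1) 2(1) by blast
    ultimately show ?thesis by blast
  qed
  moreover have "countable Fam"
    unfolding Fam_def using CC by (intro countable_Un countable_image countable_UN) auto
  moreover have "\<forall>C\<in>Fam. infinite C" unfolding Fam_def using CC by blast
  ultimately show ?thesis unfolding countable_pi_base_mod_finite_def by (intro exI[of _ Fam]) blast
qed

end

theorem (in laver_family) laver_forcing_strongly_preserves_omega_hitting:
  "strongly_preserves_omega_hitting (laver_forcing F) (\<subseteq>)"
proof (rule strongly_preserves_omega_hitting_if_countable_pi_bases)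
  fix D
  assume "set_name (laver_forcing F) (\<subseteq>) D" "forces_inter_infinite (laver_forcing F) (\<subseteq>) UNIV D"
  then interpret laver_name F D by unfold_locales
  show "countable_pi_base_mod_finite (possible_values (laver_forcing F) (\<subseteq>) D ` laver_forcing F)"
    by (rule countable_pi_base_values_below)
qed

section \<open>Dense open subsets of a subspace of a sequential space\<close>

lemma sequential_space_closedin:
  assumes "sequential_space G" "S \<subseteq> topspace G"
    and "\<And>f l. \<forall>n. f n \<in> S \<Longrightarrow> limitin G f l sequentially \<Longrightarrow> l \<in> S"
  shows "closedin G S"
  using assms unfolding sequential_space_def by blast

lemma sequential_space_countable_tightness:
  assumes seq: "sequential_space G" and x: "x \<in> G closure_of S"
  shows "\<exists>E\<subseteq>S. countable E \<and> x \<in> G closure_of E"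
proof -
  define Z where "Z = {z \<in> topspace G. \<exists>E\<subseteq>S. countable E \<and> z \<in> G closure_of E}"
  have "l \<in> Z" if f: "\<forall>n. f n \<in> Z" and lim: "limitin G f l sequentially" for f l
  proof -
    have "\<forall>n. \<exists>E\<subseteq>S. countable E \<and> f n \<in> G closure_of E" using f unfolding Z_def by blast
    from choice[OF this] obtain E
      where E: "\<forall>n. E n \<subseteq> S \<and> countable (E n) \<and> f n \<in> G closure_of (E n)" by blast
    have "f n \<in> G closure_of (\<Union>n. E n)" for n
      using E closure_of_mono[of "E n" "\<Union>n. E n" G] by blast
    then have "l \<in> G closure_of (\<Union>n. E n)"
      using limitin_closedin[OF lim closedin_closure_of] by simp
    moreover have "(\<Union>n. E n) \<subseteq> S" "countable (\<Union>n. E n)" using E by auto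
    ultimately show ?thesis unfolding Z_def using limitin_topspace[OF lim] by blast
  qed
  moreover have "Z \<subseteq> topspace G" unfolding Z_def by blast
  ultimately have "closedin G Z" using sequential_space_closedin[OF seq] by blast
  moreover have "topspace G \<inter> S \<subseteq> Z"
    unfolding Z_def using closure_of_subset[of "{z}" G for z] by blast
  ultimately have "G closure_of S \<subseteq> Z"
    by (metis closure_of_minimal closure_of_restrict)
  then show ?thesis using x unfolding Z_def by blast
qed

lemma limitin_frequently_closedin:
  assumes "limitin G f l F" "frequently (\<lambda>j. f j \<in> S) F" "closedin G S"
  shows "l \<in> S"
proof (rule ccontr)
  assume "l \<notin> S"
  then have "\<forall>\<^sub>F j in F. f j \<in> topspace G - S"
    using assms(1,3) unfolding limitin_def closedin_def by blast
  then have "\<forall>\<^sub>F j in F. f j \<notin> S" by (rule eventually_mono) blast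
  then show False using assms(2) by (simp add: frequently_def)
qed

text \<open>The limits of the sets P (kk j) along all finite-to-one kk :: nat \<Rightarrow> nat (these are exactly
  the kk with filterlim kk sequentially sequentially).\<close>
definition tail_limits :: "'a topology \<Rightarrow> (nat \<Rightarrow> 'a set) \<Rightarrow> 'a set" where
  "tail_limits G P = {y \<in> topspace G. \<exists>kk. filterlim kk sequentially sequentially \<and>
     (\<forall>U. openin G U \<and> y \<in> U \<longrightarrow> (\<forall>\<^sub>F j in sequentially. U \<inter> P (kk j) \<noteq> {}))}"

lemma limitin_tail_closures:
  assumes lim: "limitin G f l sequentially"
    and ev: "\<forall>\<^sub>F j in sequentially. \<exists>k\<ge>n. f j \<in> G closure_of P k"
  shows "l \<in> tail_limits G P \<or> (\<exists>k\<ge>n. l \<in> G closure_of P k)"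
proof -
  define kf where "kf j = (SOME k. k \<ge> n \<and> f j \<in> G closure_of P k)" for j
  have kf: "\<forall>\<^sub>F j in sequentially. kf j \<ge> n \<and> f j \<in> G closure_of P (kf j)"
    using ev unfolding kf_def by (rule eventually_mono) (rule someI_ex)
  show ?thesis
  proof (cases "filterlim kf sequentially sequentially")
    case True
    have "\<forall>\<^sub>F j in sequentially. V \<inter> P (kf j) \<noteq> {}" if "openin G V" "l \<in> V" for V
    proof -
      have "\<forall>\<^sub>F j in sequentially. f j \<in> V" using lim that unfolding limitin_def by blast
      with kf show ?thesis
        by eventually_elim (use that in \<open>auto simp: in_closure_of\<close>)
    qed
    then have "l \<in> tail_limits G P"
      unfolding tail_limits_def using True limitin_topspace[OF lim] by blast
    then show ?thesis ..
  next
    case False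
    then obtain Z where "\<not> (\<forall>\<^sub>F j in sequentially. Z \<le> kf j)"
      unfolding filterlim_at_top by blast
    then have "\<exists>\<^sub>F j in sequentially. kf j < Z" by (simp add: not_eventually not_le)
    then have "\<exists>\<^sub>F j in sequentially. \<exists>k\<in>{..<Z}. n \<le> k \<and> f j \<in> G closure_of P k"
      using kf by (rule frequently_eventually_frequently[THEN frequently_elim1]) auto
    from frequently_bex_finite[OF finite_lessThan this] obtain k
      where "\<exists>\<^sub>F j in sequentially. n \<le> k \<and> f j \<in> G closure_of P k" ..
    then have "k \<ge> n" "\<exists>\<^sub>F j in sequentially. f j \<in> G closure_of P k"
      by (auto dest: frequently_ex elim: frequently_elim1)
    then show ?thesis using limitin_frequently_closedin[OF lim] by auto
  qed
qed

lemma closedin_tail_closures: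
  assumes seq: "sequential_space G" and U: "openin G U" "U \<inter> tail_limits G P = {}"
  shows "closedin G ((topspace G - U) \<union> (\<Union>k\<in>{n..}. G closure_of P k))"
    (is "closedin G ?M")
proof (rule sequential_space_closedin[OF seq])
  show "?M \<subseteq> topspace G" by (auto simp: closure_of_subset_topspace[THEN subsetD])
  fix f l assume f: "\<forall>j. f j \<in> ?M" and lim: "limitin G f l sequentially"
  show "l \<in> ?M"
  proof (cases "l \<in> U")
    case False
    then show ?thesis using limitin_topspace[OF lim] by blast
  next
    case True
    then have "\<forall>\<^sub>F j in sequentially. f j \<in> U" using lim U(1) unfolding limitin_def by blast
    then have "\<forall>\<^sub>F j in sequentially. \<exists>k\<ge>n. f j \<in> G closure_of P k"
      using f by (auto elim!: eventually_mono)
    then show ?thesis using limitin_tail_closures[OF lim] True U(2) by blast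
  qed
qed

lemma in_closure_of_tail_limits:
  assumes seq: "sequential_space G" and P: "\<And>k. P k \<subseteq> topspace G"
    and x: "x \<in> topspace G" "\<And>n. x \<in> G closure_of (\<Union>k\<in>{n..}. P k)"
  shows "x \<in> G closure_of tail_limits G P"
  unfolding in_closure_of
proof (intro conjI allI impI)
  show "x \<in> topspace G" by (rule x(1))
  fix U assume U: "x \<in> U \<and> openin G U"
  show "\<exists>y. y \<in> tail_limits G P \<and> y \<in> U"
  proof (rule ccontr)
    assume "\<not> ?thesis"
    then have disjoint: "U \<inter> tail_limits G P = {}" by blast
    have "\<exists>k\<ge>n. x \<in> G closure_of P k" for n
    proof -
      have "(\<Union>k\<in>{n..}. P k) \<subseteq> (topspace G - U) \<union> (\<Union>k\<in>{n..}. G closure_of P k)"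
        using closure_of_subset[OF P] by blast
      moreover have "closedin G ((topspace G - U) \<union> (\<Union>k\<in>{n..}. G closure_of P k))"
        using closedin_tail_closures[OF seq conjunct2[OF U] disjoint] .
      ultimately have "G closure_of (\<Union>k\<in>{n..}. P k) \<subseteq>
          (topspace G - U) \<union> (\<Union>k\<in>{n..}. G closure_of P k)"
        by (rule closure_of_minimal)
      then have "x \<in> (topspace G - U) \<union> (\<Union>k\<in>{n..}. G closure_of P k)"
        using x(2) by blast
      then show ?thesis using U by blast
    qed
    then have inf: "infinite {k. x \<in> G closure_of P k}"
      unfolding infinite_nat_iff_unbounded_le by blast
    define kk where "kk = enumerate {k. x \<in> G closure_of P k}"
    have "filterlim kk sequentially sequentially"
      unfolding kk_def using filterlim_subseq strict_mono_enumerate[OF inf] by blast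
    moreover have "V \<inter> P (kk j) \<noteq> {}" if "openin G V" "x \<in> V" for V j
      using enumerate_in_set[OF inf, of j] that unfolding kk_def in_closure_of by blast
    ultimately have "x \<in> tail_limits G P" unfolding tail_limits_def using x(1) by auto
    then show False using U disjoint by blast
  qed
qed

lemma nwd_star_iff:
  assumes "X \<subseteq> topspace G"
  shows "U \<in> nwd_star G X \<longleftrightarrow> openin (subtopology G X) U \<and>
    (\<forall>V. openin (subtopology G X) V \<and> V \<noteq> {} \<longrightarrow> U \<inter> V \<noteq> {})"
  using assms dense_intersects_open[of "subtopology G X" U] openin_subset[of "subtopology G X" U]
  unfolding nwd_star_def by (auto simp: Int_absorb1)

lemma topspace_in_nwd_star: "X \<subseteq> topspace G \<Longrightarrow> X \<in> nwd_star G X"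
  using openin_topspace[of "subtopology G X"] by (auto simp: nwd_star_iff Int_absorb1 dest: openin_subset)

lemma nwd_star_Int:
  assumes "X \<subseteq> topspace G" "U \<in> nwd_star G X" "V \<in> nwd_star G X"
  shows "U \<inter> V \<in> nwd_star G X"
proof -
  have "U \<inter> V \<inter> W \<noteq> {}" if "openin (subtopology G X) W" "W \<noteq> {}" for W
  proof -
    have "U \<inter> W \<noteq> {}" "openin (subtopology G X) (U \<inter> W)"
      using assms that by (auto simp: nwd_star_iff)
    then show ?thesis using assms(1,3) by (auto simp: nwd_star_iff Int_assoc)
  qed
  then show ?thesis using assms by (auto simp: nwd_star_iff)
qed

lemma nwd_star_avoiding_finitely_many:
  fixes P :: "nat \<Rightarrow> 'a set"
  assumes "X \<subseteq> topspace G" and "\<And>k. \<exists>U\<in>nwd_star G X. U \<inter> P k = {}"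
  shows "\<exists>U\<in>nwd_star G X. \<forall>k<n. U \<inter> P k = {}"
proof (induction n)
  case 0
  then show ?case using topspace_in_nwd_star[OF assms(1)] by blast
next
  case (Suc n)
  then obtain U where U: "U \<in> nwd_star G X" "\<forall>k<n. U \<inter> P k = {}" by blast
  obtain V where V: "V \<in> nwd_star G X" "V \<inter> P n = {}" using assms(2) by blast
  have "U \<inter> V \<in> nwd_star G X" using nwd_star_Int[OF assms(1) U(1) V(1)] .
  moreover have "\<forall>k<Suc n. U \<inter> V \<inter> P k = {}" using U(2) V(2) less_Suc_eq by auto
  ultimately show ?case by blast
qed

lemma in_closure_of_Int_nwd_star:
  assumes X: "X \<subseteq> topspace G"
    and x: "x \<in> subtopology G X interior_of (subtopology G X closure_of E)"
    and U: "U \<in> nwd_star G X"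
  shows "x \<in> G closure_of (E \<inter> U)"
  unfolding in_closure_of
proof (intro conjI allI impI)
  let ?XT = "subtopology G X"
  show "x \<in> topspace G" using x interior_of_subset_topspace by fastforce
  fix W assume W: "x \<in> W \<and> openin G W"
  have "openin ?XT (W \<inter> X \<inter> ?XT interior_of (?XT closure_of E))"
    using W by (intro openin_Int openin_subtopology_Int) auto
  moreover have "x \<in> W \<inter> X \<inter> ?XT interior_of (?XT closure_of E)"
    using W x interior_of_subset_topspace by fastforce
  ultimately obtain z where z: "z \<in> U" "z \<in> W \<inter> X \<inter> ?XT interior_of (?XT closure_of E)"
    using U X unfolding nwd_star_iff[OF X] by blast
  have "openin ?XT (U \<inter> (W \<inter> X))"
    using U W X by (intro openin_Int openin_subtopology_Int) (auto simp: nwd_star_iff)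
  moreover have "z \<in> U \<inter> (W \<inter> X)" using z by blast
  moreover have "z \<in> ?XT closure_of E"
    using z(2) interior_of_subset[of ?XT "?XT closure_of E"] by blast
  then have "\<forall>T. z \<in> T \<and> openin ?XT T \<longrightarrow> (\<exists>y. y \<in> E \<and> y \<in> T)"
    unfolding in_closure_of by blast
  ultimately obtain y where "y \<in> E" "y \<in> U \<inter> (W \<inter> X)" by meson
  then show "\<exists>y. y \<in> E \<inter> U \<and> y \<in> W" by blast
qed

lemma nwd_star_meets_interior_closure:
  assumes X: "X \<subseteq> topspace G" and "E \<subseteq> X"
    and somewhere_dense: "\<And>U. U \<in> nwd_star G X \<Longrightarrow> U \<inter> E \<noteq> {}" and U: "U \<in> nwd_star G X"
  shows "U \<inter> subtopology G X interior_of (subtopology G X closure_of E) \<noteq> {}"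
proof -
  let ?XT = "subtopology G X"
  have "?XT interior_of (?XT closure_of E) \<noteq> {}"
  proof
    assume empty: "?XT interior_of (?XT closure_of E) = {}"
    have top: "topspace ?XT = X" using X by (rule topspace_subtopology_subset)
    have "openin ?XT (topspace ?XT - ?XT closure_of E)"
      by (rule openin_diff[OF openin_topspace closedin_closure_of])
    moreover have "?XT closure_of (topspace ?XT - ?XT closure_of E) = topspace ?XT"
      by (simp only: closure_of_complement empty Diff_empty)
    ultimately have "topspace ?XT - ?XT closure_of E \<in> nwd_star G X"
      unfolding nwd_star_def top by blast
    moreover have "E \<subseteq> ?XT closure_of E" using closure_of_subset[of E ?XT] \<open>E \<subseteq> X\<close> top by blast
    ultimately show False using somewhere_dense by blast
  qed
  moreover have "openin ?XT (?XT interior_of (?XT closure_of E))" by (rule openin_interior_of)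
  ultimately show ?thesis using U unfolding nwd_star_iff[OF X] by blast
qed

lemma finite_range_diff_if_eventually:
  fixes f :: "nat \<Rightarrow> 'a"
  assumes "\<forall>\<^sub>F j in sequentially. f j \<in> Y"
  shows "finite (range f - Y)"
proof -
  obtain N where N: "\<And>j. j \<ge> N \<Longrightarrow> f j \<in> Y" using assms unfolding eventually_sequentially by blast
  have "range f - Y \<subseteq> f ` {..<N}"
  proof
    fix y assume "y \<in> range f - Y"
    then obtain j where "y = f j" "f j \<notin> Y" by blast
    then show "y \<in> f ` {..<N}" using N not_le by blast
  qed
  then show ?thesis by (rule finite_subset) simp
qed

lemma infinite_range_if_filterlim_sequentially:
  fixes f :: "nat \<Rightarrow> nat"
  assumes "filterlim f sequentially sequentially"
  shows "infinite (range f)"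
proof
  assume "finite (range f)"
  then obtain M where M: "\<forall>j. f j \<le> M" unfolding finite_nat_set_iff_bounded_le by blast
  have "\<forall>\<^sub>F j in sequentially. Suc M \<le> f j" using assms unfolding filterlim_at_top by blast
  then have "\<forall>\<^sub>F j in sequentially. False"
    by (rule eventually_mono) (metis M Suc_n_not_le_n le_trans)
  then show False by simp
qed

lemma interior_closure_subset_closure_tail_limits:
  fixes P :: "nat \<Rightarrow> 'a set"
  assumes seq: "sequential_space G" and X: "X \<subseteq> topspace G" and P: "\<And>k. P k \<subseteq> X"
    and nowhere_dense: "\<And>k. \<exists>U\<in>nwd_star G X. U \<inter> P k = {}"
    and x: "x \<in> subtopology G X interior_of (subtopology G X closure_of (\<Union>k. P k))"
  shows "x \<in> G closure_of tail_limits G P"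
proof (rule in_closure_of_tail_limits[OF seq])
  show "P k \<subseteq> topspace G" for k using P X by blast
  show "x \<in> topspace G" using x interior_of_subset_topspace by fastforce
  fix n
  from nwd_star_avoiding_finitely_many[OF X nowhere_dense]
  obtain U where U: "U \<in> nwd_star G X" "\<forall>k<n. U \<inter> P k = {}" ..
  have "(\<Union>k. P k) \<inter> U \<subseteq> (\<Union>k\<in>{n..}. P k)" using U(2) by (auto simp: not_le[symmetric])
  then show "x \<in> G closure_of (\<Union>k\<in>{n..}. P k)"
    using in_closure_of_Int_nwd_star[OF X x U(1)] closure_of_mono by blast
qed

text \<open>By countable tightness, countably many points of tail_limits G P, and hence countably many
  finite-to-one sequences kk, already serve all dense open U.\<close>
lemma nwd_star_traces_countable_pi_base:
  fixes P :: "nat \<Rightarrow> 'a set"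
  assumes seq: "sequential_space G" and X: "X \<subseteq> topspace G" "countable X"
    and P: "\<And>k. P k \<subseteq> X"
    and nowhere_dense: "\<And>k. \<exists>U\<in>nwd_star G X. U \<inter> P k = {}"
    and somewhere_dense: "\<And>U. U \<in> nwd_star G X \<Longrightarrow> U \<inter> (\<Union>k. P k) \<noteq> {}"
  shows "countable_pi_base_mod_finite ((\<lambda>U. {k. P k \<inter> U \<noteq> {}}) ` nwd_star G X)"
proof -
  define V where "V = subtopology G X interior_of (subtopology G X closure_of (\<Union>k. P k))"
  have V_X: "V \<subseteq> X" unfolding V_def using interior_of_subset_topspace by fastforce
  have "x \<in> G closure_of tail_limits G P" if "x \<in> V" for x
    using interior_closure_subset_closure_tail_limits[OF seq X(1) P nowhere_dense]
      that[unfolded V_def] .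
  then have "\<forall>x\<in>V. \<exists>E\<subseteq>tail_limits G P. countable E \<and> x \<in> G closure_of E"
    using sequential_space_countable_tightness[OF seq] by blast
  from bchoice[OF this] obtain E
    where E: "\<forall>x\<in>V. E x \<subseteq> tail_limits G P \<and> countable (E x) \<and> x \<in> G closure_of E x" ..
  define Y where "Y = (\<Union>x\<in>V. E x)"
  have "countable Y"
    unfolding Y_def using E countable_subset[OF V_X X(2)] by (intro countable_UN) auto
  have "\<forall>y\<in>Y. \<exists>kk. filterlim kk sequentially sequentially \<and>
      (\<forall>W. openin G W \<and> y \<in> W \<longrightarrow> (\<forall>\<^sub>F j in sequentially. W \<inter> P (kk j) \<noteq> {}))"
    using E unfolding Y_def tail_limits_def by blast
  from bchoice[OF this] obtain kk where kk: "\<forall>y\<in>Y. filterlim (kk y) sequentially sequentially \<and>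
      (\<forall>W. openin G W \<and> y \<in> W \<longrightarrow> (\<forall>\<^sub>F j in sequentially. W \<inter> P (kk y j) \<noteq> {}))" ..
  have "\<exists>C\<in>(\<lambda>y. range (kk y)) ` Y. finite (C - {k. P k \<inter> U \<noteq> {}})" if U: "U \<in> nwd_star G X" for U
  proof -
    obtain x where x: "x \<in> U" "x \<in> V"
      using nwd_star_meets_interior_closure[OF X(1) _ somewhere_dense U] P unfolding V_def by blast
    obtain W where W: "openin G W" "U = W \<inter> X"
      using U unfolding nwd_star_def openin_subtopology by blast
    obtain y where y: "y \<in> E x" "y \<in> W"
      using E x W unfolding in_closure_of by blast
    then have "y \<in> Y" unfolding Y_def using x(2) by blast
    then have "\<forall>\<^sub>F j in sequentially. W \<inter> P (kk y j) \<noteq> {}" using kk W(1) y(2) by blast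
    then have "\<forall>\<^sub>F j in sequentially. kk y j \<in> {k. P k \<inter> U \<noteq> {}}"
      by (rule eventually_mono) (use P W(2) in blast)
    then show ?thesis using \<open>y \<in> Y\<close> finite_range_diff_if_eventually by blast
  qed
  moreover have "\<forall>C\<in>(\<lambda>y. range (kk y)) ` Y. infinite C"
    using kk infinite_range_if_filterlim_sequentially by blast
  ultimately show ?thesis
    unfolding countable_pi_base_mod_finite_def using \<open>countable Y\<close>
    by (intro exI[of _ "(\<lambda>y. range (kk y)) ` Y"]) blast
qed

section \<open>Laver forcing with the filter of dense open sets\<close>

lemma nwd_star_nontrivial:
  assumes X: "X \<subseteq> topspace G" "X \<noteq> {}"
    and no_isolated: "\<forall>x\<in>X. \<not> openin (subtopology G X) {x}" and U: "U \<in> nwd_star G X"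
  shows "\<exists>x\<in>U. \<exists>y\<in>U. x \<noteq> y"
proof -
  have "openin (subtopology G X) X"
    using openin_topspace[of "subtopology G X"] topspace_subtopology_subset[OF X(1)] by simp
  then have "U \<noteq> {}" using U X(2) unfolding nwd_star_iff[OF X(1)] by blast
  then obtain x where "x \<in> U" by blast
  moreover have "U \<noteq> {x}" using U no_isolated unfolding nwd_star_def by auto
  ultimately show ?thesis by blast
qed

lemma positive_set_nwd_star_iff:
  assumes e: "bij_betw e UNIV X"
  shows "positive_set {A. e ` A \<in> nwd_star G X} Y \<longleftrightarrow> (\<forall>U\<in>nwd_star G X. U \<inter> e ` Y \<noteq> {})"
proof -
  have "U = e ` (e -` U)" if "U \<in> nwd_star G X" for U
    using that e unfolding nwd_star_def bij_betw_def by blast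
  moreover have "e ` A \<inter> e ` Y = e ` (A \<inter> Y)" for A
    using e unfolding bij_betw_def by (simp add: image_Int)
  ultimately show ?thesis unfolding positive_set_def by (metis image_is_empty mem_Collect_eq)
qed

lemma laver_family_nwd_star:
  assumes seq: "sequential_space G" and X: "X \<subseteq> topspace G" "countable X"
    and no_isolated: "\<forall>x\<in>X. \<not> openin (subtopology G X) {x}"
    and e: "bij_betw e UNIV X"
  shows "laver_family {A. e ` A \<in> nwd_star G X}"
proof
  have inj: "inj e" and range_e: "range e = X" using e unfolding bij_betw_def by auto
  show "UNIV \<in> {A. e ` A \<in> nwd_star G X}" using topspace_in_nwd_star[OF X(1)] range_e by simp
  show "A \<inter> B \<in> {A. e ` A \<in> nwd_star G X}"
    if "A \<in> {A. e ` A \<in> nwd_star G X}" "B \<in> {A. e ` A \<in> nwd_star G X}" for A B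
    using nwd_star_Int[OF X(1)] that inj by (simp add: image_Int)
  show "\<exists>i\<in>A. \<exists>j\<in>A. i \<noteq> j" if "A \<in> {A. e ` A \<in> nwd_star G X}" for A
  proof -
    have X_ne: "X \<noteq> {}" using range_e by blast
    have "\<exists>x\<in>e ` A. \<exists>y\<in>e ` A. x \<noteq> y"
      using nwd_star_nontrivial[OF X(1) X_ne no_isolated] that by blast
    then obtain i j where "i \<in> A" "j \<in> A" "e i \<noteq> e j" by auto
    moreover from \<open>e i \<noteq> e j\<close> have "i \<noteq> j" by auto
    ultimately show ?thesis by blast
  qed
  fix \<phi> :: "nat \<Rightarrow> nat set"
  assume small: "\<And>k. \<not> positive_set {A. e ` A \<in> nwd_star G X} {i. k \<in> \<phi> i}"
    and big: "positive_set {A. e ` A \<in> nwd_star G X} {i. \<phi> i \<noteq> {}}"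
  define P where "P k = e ` {i. k \<in> \<phi> i}" for k
  have pi_base: "countable_pi_base_mod_finite ((\<lambda>U. {k. P k \<inter> U \<noteq> {}}) ` nwd_star G X)"
  proof (rule nwd_star_traces_countable_pi_base[OF seq X])
    show "P k \<subseteq> X" for k unfolding P_def using range_e by blast
    show "\<exists>U\<in>nwd_star G X. U \<inter> P k = {}" for k
      using small[of k] unfolding positive_set_nwd_star_iff[OF e] P_def by blast
    have "(\<Union>k. P k) = e ` {i. \<phi> i \<noteq> {}}" unfolding P_def by blast
    then show "U \<inter> (\<Union>k. P k) \<noteq> {}" if "U \<in> nwd_star G X" for U
      using big that unfolding positive_set_nwd_star_iff[OF e] by simp
  qed
  have traces: "{k. P k \<inter> e ` A \<noteq> {}} = (\<Union>i\<in>A. \<phi> i)" for A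
    unfolding P_def using inj by (auto dest: injD)
  show "countable_pi_base_mod_finite ((\<lambda>A. \<Union>i\<in>A. \<phi> i) ` {A. e ` A \<in> nwd_star G X})"
  proof (rule countable_pi_base_mod_finite_mono[OF pi_base])
    fix Y assume "Y \<in> (\<lambda>A. \<Union>i\<in>A. \<phi> i) ` {A. e ` A \<in> nwd_star G X}"
    then obtain A where "e ` A \<in> nwd_star G X" "Y = (\<Union>i\<in>A. \<phi> i)" by blast
    then show "\<exists>Y'\<in>(\<lambda>U. {k. P k \<inter> U \<noteq> {}}) ` nwd_star G X. Y' \<subseteq> Y"
      using traces[of A] by blast
  qed
qed

theorem lemma19:
  fixes G :: "'a topology" and X :: "'a set" and e :: "nat \<Rightarrow> 'a"
  assumes "regular_space G" and "t1_space G"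
    and "sequential_space G"
    and "X \<subseteq> topspace G"
    and "countable X"
    and "\<forall>x\<in>X. \<not> openin (subtopology G X) {x}"
    and "bij_betw e UNIV X"
  shows "strongly_preserves_omega_hitting
           (laver_forcing {A. e ` A \<in> nwd_star G X}) (\<subseteq>)"
  using laver_family_nwd_star[OF assms(3-7)]
  by (rule laver_family.laver_forcing_strongly_preserves_omega_hitting)

end
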